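(* Let $d\ge1$, $L\ge1$. For every sequence $(x_t)\subseteq[-1,1]^d$, every $f^\star\in\mathcal{H}_L$ with $y_t=f^\star(x_t)$, and every horizon $T\ge2$, the envelope strategy satisfies $\sum_{t=1}^T|y_t-\hat y_t|^d\le 8^dL^d(1+\log T)$.
   Context: $\mathcal{H}_L$ is the set of functions $h:[-1,1]^d\to[0,1]$ with $|h(x)-h(x')|\le L\|x-x'\|_\infty$. Envelope strategy: at round $t$, with past data $(x_s,y_s)_{s<t}$, define $\underline h_t(x)=\max\{0,\max_{s<t}(y_s-L\|x-x_s\|_\infty)\}$ and $\overline h_t(x)=\min\{1,\min_{s<t}(y_s+L\|x-x_s\|_\infty)\}$ (with $\max_{\emptyset}=-\infty$, $\min_\emptyset=+\infty$), and predict $\hat y_t=\frac12(\underline h_t(x_t)+\overline h_t(x_t))$. $\log$ is the natural logarithm. *)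

theory Defs
  imports "HOL-Analysis.Analysis"
begin

definition linf_dist :: "real ^ 'd \<Rightarrow> real ^ 'd \<Rightarrow> real" where
  "linf_dist x x' = Max ((\<lambda>i. \<bar>x $ i - x' $ i\<bar>) ` UNIV)"

definition cube :: "(real ^ 'd) set" where
  "cube = {x. \<forall>i. -1 \<le> x $ i \<and> x $ i \<le> 1}"

definition lip_class :: "real \<Rightarrow> (real ^ 'd \<Rightarrow> real) set" where
  "lip_class L = {h. (\<forall>x\<in>cube. 0 \<le> h x \<and> h x \<le> 1) \<and>
     (\<forall>x\<in>cube. \<forall>x'\<in>cube. \<bar>h x - h x'\<bar> \<le> L * linf_dist x x')}"

text \<open>Envelopes at round t using past data (xs s, ys s) for 1 \<le> s < t.
  Empty max is -\<infinity> and empty min is +\<infinity>, so with no past data they are 0 and 1.\<close>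
definition lower_env :: "real \<Rightarrow> (nat \<Rightarrow> real ^ 'd) \<Rightarrow> (nat \<Rightarrow> real) \<Rightarrow> nat \<Rightarrow> real ^ 'd \<Rightarrow> real" where
  "lower_env L xs ys t x =
     (if t \<le> 1 then 0
      else max 0 (Max ((\<lambda>s. ys s - L * linf_dist x (xs s)) ` {1..<t})))"

definition upper_env :: "real \<Rightarrow> (nat \<Rightarrow> real ^ 'd) \<Rightarrow> (nat \<Rightarrow> real) \<Rightarrow> nat \<Rightarrow> real ^ 'd \<Rightarrow> real" where
  "upper_env L xs ys t x =
     (if t \<le> 1 then 1
      else min 1 (Min ((\<lambda>s. ys s + L * linf_dist x (xs s)) ` {1..<t})))"

definition envelope_pred :: "real \<Rightarrow> (nat \<Rightarrow> real ^ 'd) \<Rightarrow> (nat \<Rightarrow> real) \<Rightarrow> nat \<Rightarrow> real" where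
  "envelope_pred L xs ys t =
     (lower_env L xs ys t (xs t) + upper_env L xs ys t (xs t)) / 2"

end

theory Submission
  imports Defs
begin

text \<open>For s < t both envelopes at x_t lie within L |x_t - x_s| of y_s, so the
  error of the midpoint prediction at round t is at most L times the distance from x_t to every
  earlier query, and at most 1/2. Hence the rounds with error at least \<delta> query (\<delta>/L)-separated
  points of the cube, and there are at most (3L/\<delta>)^d of them. If the errors are sorted
  decreasingly, the k-th one therefore has d-th power at most (3L)^d/k, and summing over k
  gives (3L)^d H_T \<le> (3L)^d (1 + log T).\<close>

lemma harm_le_one_plus_ln:
  assumes "n > 0"
  shows "harm n \<le> 1 + ln (real n)"
  using euler_mascheroni_sequence_decreasing[of 1 n] assms by (simp add: harm_def)

lemma sum_le_harm_card_of_tail_bound: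
  fixes a :: "'a \<Rightarrow> real"
  assumes "finite S" and "\<And>t. t \<in> S \<Longrightarrow> 0 \<le> a t"
    and "\<And>\<delta>. \<delta> > 0 \<Longrightarrow> real (card {t\<in>S. \<delta> \<le> a t}) * \<delta> \<le> C"
  shows "(\<Sum>t\<in>S. a t) \<le> C * harm (card S)"
  using assms
proof (induction "card S" arbitrary: S)
  case 0
  then show ?case by (simp add: harm_def)
next
  case (Suc k S)
  have "C \<ge> 0"
    using Suc.prems(3)[of 1] by (smt (verit) of_nat_0_le_iff)
  have "S \<noteq> {}" using Suc.hyps(2) by auto
  then obtain t0 where "is_arg_min a (\<lambda>t. t \<in> S) t0"
    using ex_is_arg_min_if_finite[OF Suc.prems(1)] by blast
  then have t0: "t0 \<in> S" and t0_min: "\<And>t. t \<in> S \<Longrightarrow> a t0 \<le> a t"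
    by (simp_all add: is_arg_min_linorder)
  have "card (S - {t0}) = k" using Suc.hyps(2) Suc.prems(1) t0 by simp
  have "(\<Sum>t\<in>S - {t0}. a t) \<le> C * harm (card (S - {t0}))"
  proof (rule Suc.hyps(1))
    fix \<delta> :: real assume "\<delta> > 0"
    have "card {t\<in>S - {t0}. \<delta> \<le> a t} \<le> card {t\<in>S. \<delta> \<le> a t}"
      using Suc.prems(1) by (intro card_mono) auto
    then show "real (card {t\<in>S - {t0}. \<delta> \<le> a t}) * \<delta> \<le> C"
      using Suc.prems(3)[OF \<open>\<delta> > 0\<close>] \<open>\<delta> > 0\<close>
      by (smt (verit) mult_right_mono of_nat_le_iff)
  qed (use Suc t0 in auto)
  moreover have "a t0 \<le> C * inverse (real (Suc k))"
  proof (cases "a t0 > 0")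
    case True
    have "{t\<in>S. a t0 \<le> a t} = S" using t0_min by auto
    then have "real (Suc k) * a t0 \<le> C" using Suc.prems(3)[OF True] Suc.hyps(2) by simp
    then show ?thesis by (simp add: field_simps)
  next
    case False
    then show ?thesis using Suc.prems(2)[OF t0] \<open>C \<ge> 0\<close> by simp
  qed
  moreover have "(\<Sum>t\<in>S. a t) = a t0 + (\<Sum>t\<in>S - {t0}. a t)"
    using Suc.prems(1) t0 by (simp add: sum.remove)
  moreover have "harm (card S) = harm k + inverse (real (Suc k))"
    using Suc.hyps(2) by (metis harm_Suc)
  ultimately show ?case
    using \<open>card (S - {t0}) = k\<close> by (simp add: distrib_left)
qed

lemma linf_dist_commute: "linf_dist x y = linf_dist y x"
  unfolding linf_dist_def by (simp add: abs_minus_commute)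

lemma linf_dist_self [simp]: "linf_dist x x = 0"
  unfolding linf_dist_def by simp

lemma linf_dist_less_iff: "linf_dist x y < e \<longleftrightarrow> (\<forall>i. \<bar>x $ i - y $ i\<bar> < e)"
  unfolding linf_dist_def by simp

lemma card_separated_subset_cube_le:
  fixes Q :: "(real ^ 'd) set"
  assumes "Q \<subseteq> cube" and "\<epsilon> > 0"
    and separated: "\<And>p q. p \<in> Q \<Longrightarrow> q \<in> Q \<Longrightarrow> p \<noteq> q \<Longrightarrow> \<epsilon> \<le> linf_dist p q"
  shows "real (card Q) \<le> (2 / \<epsilon> + 2) ^ CARD('d)"
proof -
  define M :: nat where "M = nat \<lfloor>2 / \<epsilon>\<rfloor> + 1"
  have "real M = \<lfloor>2 / \<epsilon>\<rfloor> + 1" using \<open>\<epsilon> > 0\<close> by (simp add: M_def)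
  then have M_gt: "real M > 2 / \<epsilon>" and M_le: "real M \<le> 2 / \<epsilon> + 1"
    using floor_correct[of "2 / \<epsilon>"] by linarith+
  have "real M > 0" by (simp add: M_def)
  \<comment> \<open>the grid cell of side 2/M containing p; points in a common cell are closer than \<epsilon>\<close>
  define cell where "cell p = (\<lambda>i::'d. \<lfloor>(p $ i + 1) * real M / 2\<rfloor>)" for p :: "real ^ 'd"
  have cell_range: "cell ` Q \<subseteq> (\<Pi>\<^sub>E i\<in>UNIV. {0..int M})"
  proof -
    have "0 \<le> cell p i \<and> cell p i \<le> int M" if "p \<in> cube" for p i
    proof -
      have "-1 \<le> p $ i" "p $ i \<le> 1" using that by (auto simp: cube_def)
      then have "0 \<le> (p $ i + 1) * real M" "(p $ i + 1) * real M \<le> 2 * real M"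
        by (simp_all add: mult_right_mono)
      then show ?thesis by (simp add: cell_def floor_le_iff)
    qed
    then show ?thesis using \<open>Q \<subseteq> cube\<close> by auto
  qed
  have "inj_on cell Q"
  proof (rule inj_onI, rule ccontr)
    fix p q assume "p \<in> Q" "q \<in> Q" "cell p = cell q" "p \<noteq> q"
    have "\<bar>p $ i - q $ i\<bar> < \<epsilon>" for i
    proof -
      define u v where "u = (p $ i + 1) * real M / 2" and "v = (q $ i + 1) * real M / 2"
      have "real_of_int \<lfloor>u\<rfloor> = real_of_int \<lfloor>v\<rfloor>"
        using fun_cong[OF \<open>cell p = cell q\<close>, of i] by (simp add: cell_def u_def v_def)
      then have "\<bar>u - v\<bar> < 1"
        using floor_correct[of u] floor_correct[of v] by linarith
      moreover have "\<bar>u - v\<bar> = \<bar>p $ i - q $ i\<bar> * real M / 2"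
        by (simp add: u_def v_def abs_mult flip: diff_divide_distrib left_diff_distrib)
      ultimately have "\<bar>p $ i - q $ i\<bar> < 2 / real M"
        using \<open>real M > 0\<close> by (simp add: field_simps)
      also have "\<dots> < \<epsilon>" using M_gt \<open>\<epsilon> > 0\<close> \<open>real M > 0\<close> by (simp add: field_simps)
      finally show ?thesis .
    qed
    then have "linf_dist p q < \<epsilon>" by (simp add: linf_dist_less_iff)
    with separated[OF \<open>p \<in> Q\<close> \<open>q \<in> Q\<close> \<open>p \<noteq> q\<close>] show False by simp
  qed
  then have "card Q = card (cell ` Q)" by (simp add: card_image)
  also have "\<dots> \<le> card (\<Pi>\<^sub>E i\<in>(UNIV::'d set). {0..int M})"
    using cell_range by (intro card_mono) (simp_all add: finite_PiE)
  also have "\<dots> = (M + 1) ^ CARD('d)" by (simp add: card_PiE nat_add_distrib)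
  finally have "real (card Q) \<le> (real M + 1) ^ CARD('d)"
    by (metis of_nat_1 of_nat_add of_nat_le_iff of_nat_power)
  also have "\<dots> \<le> (2 / \<epsilon> + 2) ^ CARD('d)"
    using M_le by (intro power_mono) auto
  finally show ?thesis .
qed

lemma lip_classD:
  assumes "f \<in> lip_class L" and "x \<in> cube" and "x' \<in> cube"
  shows "0 \<le> f x" and "f x \<le> 1" and "\<bar>f x - f x'\<bar> \<le> L * linf_dist x x'"
  using assms by (simp_all add: lip_class_def)

lemma lower_env_nonneg: "0 \<le> lower_env L xs ys t x"
  by (simp add: lower_env_def)

lemma upper_env_le_one: "upper_env L xs ys t x \<le> 1"
  by (simp add: upper_env_def)

lemma lower_env_le_lip:
  assumes "f \<in> lip_class L" and "x \<in> cube" and "\<And>s. xs s \<in> cube"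
  shows "lower_env L xs (\<lambda>s. f (xs s)) t x \<le> f x"
proof -
  have "f (xs s) - L * linf_dist x (xs s) \<le> f x" for s
    using lip_classD(3)[OF assms(1,2) assms(3)[of s]] by linarith
  moreover have "0 \<le> f x" using lip_classD(1) assms by blast
  ultimately show ?thesis by (auto simp: lower_env_def)
qed

lemma upper_env_ge_lip:
  assumes "f \<in> lip_class L" and "x \<in> cube" and "\<And>s. xs s \<in> cube"
  shows "f x \<le> upper_env L xs (\<lambda>s. f (xs s)) t x"
proof -
  have "f x \<le> f (xs s) + L * linf_dist x (xs s)" for s
    using lip_classD(3)[OF assms(1,2) assms(3)[of s]] by linarith
  moreover have "f x \<le> 1" using lip_classD(2) assms by blast
  ultimately show ?thesis by (auto simp: upper_env_def)
qed

lemma upper_env_minus_lower_env_le: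
  assumes "1 \<le> s" and "s < t"
  shows "upper_env L xs ys t x - lower_env L xs ys t x \<le> 2 * L * linf_dist x (xs s)"
proof -
  have "ys s - L * linf_dist x (xs s) \<le> Max ((\<lambda>s. ys s - L * linf_dist x (xs s)) ` {1..<t})"
    using assms by (intro Max_ge) auto
  moreover have "Min ((\<lambda>s. ys s + L * linf_dist x (xs s)) ` {1..<t}) \<le> ys s + L * linf_dist x (xs s)"
    using assms by (intro Min_le) auto
  moreover have "\<not> t \<le> 1" using assms by simp
  ultimately show ?thesis unfolding lower_env_def upper_env_def by (simp only: if_False)
qed

definition envelope_loss :: "real \<Rightarrow> (nat \<Rightarrow> real ^ 'd) \<Rightarrow> (real ^ 'd \<Rightarrow> real) \<Rightarrow> nat \<Rightarrow> real" where
  "envelope_loss L xs f t = \<bar>f (xs t) - envelope_pred L xs (\<lambda>s. f (xs s)) t\<bar>"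

lemma double_envelope_loss_le_width:
  assumes "f \<in> lip_class L" and "\<And>s. xs s \<in> cube"
  shows "2 * envelope_loss L xs f t
           \<le> upper_env L xs (\<lambda>s. f (xs s)) t (xs t) - lower_env L xs (\<lambda>s. f (xs s)) t (xs t)"
proof -
  have "lower_env L xs (\<lambda>s. f (xs s)) t (xs t) \<le> f (xs t)"
    and "f (xs t) \<le> upper_env L xs (\<lambda>s. f (xs s)) t (xs t)"
    using lower_env_le_lip upper_env_ge_lip assms by blast+
  then show ?thesis
    unfolding envelope_loss_def envelope_pred_def by (simp add: abs_le_iff field_simps)
qed

lemma double_envelope_loss_le_one:
  assumes "f \<in> lip_class L" and "\<And>s. xs s \<in> cube"
  shows "2 * envelope_loss L xs f t \<le> 1"
  using double_envelope_loss_le_width[where xs=xs, OF assms, of t]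
    lower_env_nonneg[of L xs "\<lambda>s. f (xs s)" t "xs t"] upper_env_le_one[of L xs "\<lambda>s. f (xs s)" t "xs t"]
  by linarith

lemma envelope_loss_le_dist:
  assumes "f \<in> lip_class L" and "\<And>s. xs s \<in> cube" and "1 \<le> s" and "s < t"
  shows "envelope_loss L xs f t \<le> L * linf_dist (xs t) (xs s)"
  using double_envelope_loss_le_width[where xs=xs, OF assms(1,2), of t]
    upper_env_minus_lower_env_le[OF assms(3,4), of L xs "\<lambda>s. f (xs s)" "xs t"]
  by linarith

lemma envelope_loss_tail_count:
  fixes xs :: "nat \<Rightarrow> real ^ 'd"
  assumes "L \<ge> 1" and cube: "\<And>s. xs s \<in> cube" and lip: "f \<in> lip_class L" and "\<delta> > 0"
  shows "real (card {t\<in>{1..T}. \<delta> \<le> envelope_loss L xs f t}) * \<delta> ^ CARD('d) \<le> (3 * L) ^ CARD('d)"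
proof (cases "2 * \<delta> \<le> 1")
  case False
  have "\<not> \<delta> \<le> envelope_loss L xs f t" for t
    using False double_envelope_loss_le_one[where xs=xs, OF lip cube, of t] by linarith
  then have no_rounds: "card {t\<in>{1..T}. \<delta> \<le> envelope_loss L xs f t} = 0" by simp
  show ?thesis unfolding no_rounds using \<open>L \<ge> 1\<close> by simp
next
  case True
  define P where "P = {t\<in>{1..T}. \<delta> \<le> envelope_loss L xs f t}"
  have separated_before: "\<delta> / L \<le> linf_dist (xs t) (xs t')" if "t \<in> P" "t' \<in> P" "t' < t" for t t'
  proof -
    have "\<delta> \<le> L * linf_dist (xs t) (xs t')"
      using that envelope_loss_le_dist[where xs=xs, OF lip cube, of t' t] by (auto simp: P_def)
    then show ?thesis using \<open>L \<ge> 1\<close> by (simp add: field_simps)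
  qed
  have separated: "\<delta> / L \<le> linf_dist (xs t) (xs t')" if "t \<in> P" "t' \<in> P" "t \<noteq> t'" for t t'
    using separated_before[of t t'] separated_before[of t' t] that by (metis linf_dist_commute nat_neq_iff)
  have "inj_on xs P"
    using separated \<open>\<delta> > 0\<close> \<open>L \<ge> 1\<close> by (smt (verit) divide_pos_pos inj_onI linf_dist_self)
  then have "real (card P) = real (card (xs ` P))" by (simp add: card_image)
  also have "\<dots> \<le> (2 / (\<delta> / L) + 2) ^ CARD('d)"
    using cube separated \<open>\<delta> > 0\<close> \<open>L \<ge> 1\<close>
    by (intro card_separated_subset_cube_le) auto
  finally have "real (card P) * \<delta> ^ CARD('d) \<le> ((2 * L / \<delta> + 2) * \<delta>) ^ CARD('d)"
    using \<open>\<delta> > 0\<close> by (simp add: power_mult_distrib mult_right_mono)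
  also have "(2 * L / \<delta> + 2) * \<delta> = 2 * L + 2 * \<delta>"
    using \<open>\<delta> > 0\<close> by (simp add: field_simps)
  also have "(2 * L + 2 * \<delta>) ^ CARD('d) \<le> (3 * L) ^ CARD('d)"
    using True \<open>L \<ge> 1\<close> \<open>\<delta> > 0\<close> by (intro power_mono) auto
  finally show ?thesis unfolding P_def .
qed

theorem corollaryA5:
  fixes L :: real and xs :: "nat \<Rightarrow> real ^ 'd" and f :: "real ^ 'd \<Rightarrow> real" and T :: nat
  assumes "L \<ge> 1"
    and "\<And>t. xs t \<in> cube"
    and "f \<in> lip_class L"
    and "T \<ge> 2"
  shows "(\<Sum>t = 1..T. \<bar>f (xs t) - envelope_pred L xs (\<lambda>s. f (xs s)) t\<bar> ^ CARD('d))
           \<le> 8 ^ CARD('d) * L ^ CARD('d) * (1 + ln (real T))"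
proof -
  define d where "d = CARD('d)"
  define e where "e = envelope_loss L xs f"
  have "d > 0" by (simp add: d_def)
  have "(\<Sum>t = 1..T. e t ^ d) \<le> (3 * L) ^ d * harm (card {1..T})"
  proof (rule sum_le_harm_card_of_tail_bound)
    fix \<delta> :: real assume "\<delta> > 0"
    have "\<delta> \<le> x ^ d \<longleftrightarrow> root d \<delta> \<le> x" if "0 \<le> x" for x
      using \<open>d > 0\<close> that by (metis real_root_le_iff real_root_power_cancel)
    then have "{t\<in>{1..T}. \<delta> \<le> e t ^ d} = {t\<in>{1..T}. root d \<delta> \<le> e t}"
      by (simp add: e_def envelope_loss_def)
    then show "real (card {t\<in>{1..T}. \<delta> \<le> e t ^ d}) * \<delta> \<le> (3 * L) ^ d"
      using envelope_loss_tail_count[where xs=xs, OF assms(1-3) real_root_gt_zero, of d \<delta> T] \<open>\<delta> > 0\<close>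
      by (simp add: d_def e_def)
  qed (simp_all add: e_def envelope_loss_def)
  also have "\<dots> \<le> (3 * L) ^ d * (1 + ln (real T))"
    using harm_le_one_plus_ln[of T] \<open>T \<ge> 2\<close> \<open>L \<ge> 1\<close> by (intro mult_left_mono) auto
  also have "\<dots> \<le> (8 * L) ^ d * (1 + ln (real T))"
    using \<open>L \<ge> 1\<close> \<open>T \<ge> 2\<close> by (intro mult_right_mono power_mono) auto
  finally show ?thesis by (simp add: d_def e_def envelope_loss_def power_mult_distrib)
qed

end
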